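(* Let $(M,\rho)$ be a metric space and $f:[a,b]\to M$ continuous. Suppose $md(f,x)$ exists for almost every $x\in[a,b]$, $x\mapsto md(f,x)$ is Lebesgue integrable on $[a,b]$, and $f$ has property $(N)$. Then $f$ is absolutely continuous on $[a,b]$.
   Context: $md(f,x)=\lim_{t\to0,\ x+t\in[a,b]}\rho(f(x+t),f(x))/|t|$ when it exists. Property $(N)$: $\mathcal H^1(f(B))=0$ whenever $B\subset[a,b]$ has Lebesgue measure $0$, $\mathcal H^1$ being one-dimensional Hausdorff measure on $M$. Absolute continuity of $f$: for every $\varepsilon>0$ there is $\delta>0$ such that for non-overlapping intervals $[a_i,b_i]\subset[a,b]$ with $\sum_i(b_i-a_i)<\delta$ one has $\sum_i\rho(f(b_i),f(a_i))<\varepsilon$. *)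

theory Defs
  imports "HOL-Analysis.Analysis"
begin

definition md_exists :: "(real \<Rightarrow> 'a::metric_space) \<Rightarrow> real \<Rightarrow> real \<Rightarrow> real \<Rightarrow> bool" where
  "md_exists f a b x \<longleftrightarrow>
     (\<exists>L. ((\<lambda>t. dist (f (x + t)) (f x) / \<bar>t\<bar>) \<longlongrightarrow> L) (at 0 within {t. x + t \<in> {a..b}}))"

definition md :: "(real \<Rightarrow> 'a::metric_space) \<Rightarrow> real \<Rightarrow> real \<Rightarrow> real \<Rightarrow> real" where
  "md f a b x = Lim (at 0 within {t. x + t \<in> {a..b}}) (\<lambda>t. dist (f (x + t)) (f x) / \<bar>t\<bar>)"

definition hausdorff1_delta :: "real \<Rightarrow> 'a::metric_space set \<Rightarrow> ennreal" where
  "hausdorff1_delta \<delta> A =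
     (INF C \<in> {C :: nat \<Rightarrow> 'a set. A \<subseteq> (\<Union>i. C i) \<and> (\<forall>i. bounded (C i) \<and> diameter (C i) \<le> \<delta>)}.
        (\<Sum>i. ennreal (diameter (C i))))"

definition hausdorff1 :: "'a::metric_space set \<Rightarrow> ennreal" where
  "hausdorff1 A = (SUP \<delta> \<in> {0<..}. hausdorff1_delta \<delta> A)"

definition property_N :: "(real \<Rightarrow> 'a::metric_space) \<Rightarrow> real \<Rightarrow> real \<Rightarrow> bool" where
  "property_N f a b \<longleftrightarrow> (\<forall>B. B \<subseteq> {a..b} \<and> B \<in> null_sets lebesgue \<longrightarrow> hausdorff1 (f ` B) = 0)"

definition abs_cont_metric :: "(real \<Rightarrow> 'a::metric_space) \<Rightarrow> real \<Rightarrow> real \<Rightarrow> bool" where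
  "abs_cont_metric f a b \<longleftrightarrow>
     (\<forall>\<epsilon>>0. \<exists>\<delta>>0. \<forall>(n::nat) (as::nat \<Rightarrow> real) (bs::nat \<Rightarrow> real).
        (\<forall>i<n. a \<le> as i \<and> as i \<le> bs i \<and> bs i \<le> b) \<and>
        (\<forall>i<n. \<forall>j<n. i \<noteq> j \<longrightarrow> bs i \<le> as j \<or> bs j \<le> as i) \<and>
        (\<Sum>i<n. bs i - as i) < \<delta>
        \<longrightarrow> (\<Sum>i<n. dist (f (bs i)) (f (as i))) < \<epsilon>)"

end

theory Submission
  imports Defs
begin

text \<open>
  Fix \<open>a \<le> c \<le> d \<le> b\<close>, an integrable \<open>g \<ge> md f\<close> and put \<open>h t = dist (f c) (f t)\<close>. By
  continuity, \<open>h ` {c..d}\<close> contains the interval \<open>{0..dist (f c) (f d)}\<close>. Cut the points of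
  \<open>{c..<d}\<close> where the metric derivative exists into the layers \<open>k\<epsilon> \<le> g < (k+1)\<epsilon>\<close>. On the
  \<open>k\<close>-th layer \<open>h\<close> is pointwise Lipschitz with constant \<open>(k+1)\<epsilon>\<close>, so a Vitali covering
  bounds the measure of its image by \<open>(k+1)\<epsilon>\<close> times the measure of the layer, up to an
  arbitrarily small error. Summing over the layers bounds the image of the good points by
  \<open>\<integral>\<^sub>c\<^sup>d g + O(\<epsilon>)\<close>, and property (N) makes the image of the remaining null set negligible.
  Hence \<open>dist (f c) (f d) \<le> \<integral>\<^sub>c\<^sup>d g\<close>, and the absolute continuity of the integral gives the
  absolute continuity of \<open>f\<close>.
\<close>

lemma Vitali_covering_balls_bounded_radius:
  fixes S :: "'a::euclidean_space set"
  assumes r: "\<And>x. x \<in> S \<Longrightarrow> r x > 0"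
  obtains C :: "('a \<times> real) set" where "countable C"
    "\<And>i. i \<in> C \<Longrightarrow> fst i \<in> S \<and> 0 < snd i \<and> snd i \<le> r (fst i)"
    "pairwise (\<lambda>i j. disjnt (ball (fst i) (snd i)) (ball (fst j) (snd j))) C"
    "negligible (S - (\<Union>i\<in>C. ball (fst i) (snd i)))"
proof -
  define K where "K = {(x, min (r x) (t/2)) | x t. x \<in> S \<and> 0 < t}"
  obtain C where "countable C" "C \<subseteq> K"
    "pairwise (\<lambda>i j. disjnt (ball (fst i) (snd i)) (ball (fst j) (snd j))) C"
    "negligible (S - (\<Union>i\<in>C. ball (fst i) (snd i)))"
  proof (rule Vitali_covering_theorem_balls[of S K fst snd])
    fix x and t :: real
    assume "x \<in> S" "0 < t"
    then show "\<exists>i. i \<in> K \<and> x \<in> ball (fst i) (snd i) \<and> snd i < t"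
      using r[of x] unfolding K_def by (intro exI[of _ "(x, min (r x) (t/2))"]) auto
  qed
  moreover have "fst i \<in> S \<and> 0 < snd i \<and> snd i \<le> r (fst i)" if "i \<in> K" for i
    using that r unfolding K_def by auto
  ultimately show thesis
    using that by blast
qed

lemma
  fixes C :: "(real \<times> real) set" and y :: "real \<times> real \<Rightarrow> real"
  assumes "countable C" and U: "U \<in> lmeasurable" and "B \<ge> 0"
    and C: "\<And>i. i \<in> C \<Longrightarrow> 0 < snd i \<and> ball (fst i) (snd i) \<subseteq> U"
    and disj: "pairwise (\<lambda>i j. disjnt (ball (fst i) (snd i)) (ball (fst j) (snd j))) C"
  shows lmeasurable_UN_stretched_cballs: "(\<Union>i\<in>C. cball (y i) (B * snd i)) \<in> lmeasurable"
    and measure_UN_stretched_cballs_le: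
      "measure lebesgue (\<Union>i\<in>C. cball (y i) (B * snd i)) \<le> B * measure lebesgue U"
proof -
  have cball_measure: "measure lebesgue (cball (y i) (B * snd i)) = B * measure lebesgue (ball (fst i) (snd i))"
    if "i \<in> C" for i
    using C[OF that] \<open>B \<ge> 0\<close>
    by (simp add: cball_eq_atLeastAtMost ball_eq_greaterThanLessThan algebra_simps)
  have bound: "measure lebesgue (\<Union>i\<in>C'. cball (y i) (B * snd i)) \<le> B * measure lebesgue U"
    if "C' \<subseteq> C" "finite C'" for C'
  proof -
    have "measure lebesgue (\<Union>i\<in>C'. cball (y i) (B * snd i)) \<le> (\<Sum>i\<in>C'. measure lebesgue (cball (y i) (B * snd i)))"
      using that by (intro measure_UNION_le) auto
    also have "\<dots> = B * (\<Sum>i\<in>C'. measure lebesgue (ball (fst i) (snd i)))"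
      using that cball_measure by (simp add: sum_distrib_left subset_eq)
    also have "\<dots> = B * measure lebesgue (\<Union>i\<in>C'. ball (fst i) (snd i))"
      using that disj by (subst measure_UNION') (auto intro: pairwise_subset)
    also have "\<dots> \<le> B * measure lebesgue U"
      using that C U \<open>B \<ge> 0\<close>
      by (intro mult_left_mono measure_mono_fmeasurable) (auto simp: fmeasurableD)
    finally show ?thesis .
  qed
  show "(\<Union>i\<in>C. cball (y i) (B * snd i)) \<in> lmeasurable"
    by (rule fmeasurable_UN_bound[OF \<open>countable C\<close> _ bound]) auto
  show "measure lebesgue (\<Union>i\<in>C. cball (y i) (B * snd i)) \<le> B * measure lebesgue U"
    by (rule measure_UN_bound[OF \<open>countable C\<close> _ bound]) auto
qed

lemma lmeasurable_outer_open:
  fixes S :: "'a::euclidean_space set"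
  assumes S: "S \<in> lmeasurable" and "e > 0"
  obtains U where "open U" "S \<subseteq> U" "U \<in> lmeasurable" "measure lebesgue U < measure lebesgue S + e"
proof -
  obtain U where "open U" "S \<subseteq> U" "U - S \<in> lmeasurable" "emeasure lebesgue (U - S) < ennreal e"
    using sets_lebesgue_outer_open[OF fmeasurableD[OF S] \<open>e > 0\<close>] by blast
  moreover from this have "measure lebesgue (U - S) < e"
    by (metis emeasure_eq_measure2 ennreal_leI not_less)
  ultimately show thesis
    using S that by (auto simp: measurable_measure_Diff dest!: fmeasurable_Diff_D)
qed

lemma pointwise_lipschitz_image_measure_le:
  fixes H :: "real \<Rightarrow> real"
  assumes S: "S \<in> lmeasurable" and "B \<ge> 0" and "d > 0"
    and lip: "\<And>x. x \<in> S \<Longrightarrow> \<exists>\<rho>>0. \<forall>y\<in>S. \<bar>y - x\<bar> < \<rho> \<longrightarrow> \<bar>H y - H x\<bar> \<le> B * \<bar>y - x\<bar>"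
    and neg: "\<And>Z. Z \<subseteq> S \<Longrightarrow> negligible Z \<Longrightarrow> negligible (H ` Z)"
  obtains T where "H ` S \<subseteq> T" "T \<in> lmeasurable" "measure lebesgue T \<le> B * (measure lebesgue S + d)"
proof -
  obtain U where "open U" "S \<subseteq> U" and U: "U \<in> lmeasurable"
    and U_less: "measure lebesgue U < measure lebesgue S + d"
    using lmeasurable_outer_open[OF S \<open>d > 0\<close>] by blast
  have "\<exists>r>0. ball x r \<subseteq> U \<and> (\<forall>y\<in>S. \<bar>y - x\<bar> < r \<longrightarrow> \<bar>H y - H x\<bar> \<le> B * \<bar>y - x\<bar>)"
    if x: "x \<in> S" for x
  proof -
    obtain \<rho> where "\<rho> > 0" "\<forall>y\<in>S. \<bar>y - x\<bar> < \<rho> \<longrightarrow> \<bar>H y - H x\<bar> \<le> B * \<bar>y - x\<bar>"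
      using lip[OF x] by blast
    moreover obtain l where "l > 0" "ball x l \<subseteq> U"
      using \<open>open U\<close> \<open>S \<subseteq> U\<close> x openE by blast
    ultimately show ?thesis
      by (intro exI[of _ "min \<rho> l"]) auto
  qed
  then obtain r where r: "\<And>x. x \<in> S \<Longrightarrow> r x > 0 \<and> ball x (r x) \<subseteq> U \<and>
      (\<forall>y\<in>S. \<bar>y - x\<bar> < r x \<longrightarrow> \<bar>H y - H x\<bar> \<le> B * \<bar>y - x\<bar>)"
    by metis
  obtain C where C: "countable C" "\<And>i. i \<in> C \<Longrightarrow> fst i \<in> S \<and> 0 < snd i \<and> snd i \<le> r (fst i)"
    and disj: "pairwise (\<lambda>i j. disjnt (ball (fst i) (snd i)) (ball (fst j) (snd j))) C"
    and null: "negligible (S - (\<Union>i\<in>C. ball (fst i) (snd i)))"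
    using Vitali_covering_balls_bounded_radius[of S r] r by blast
  have C_U: "0 < snd i \<and> ball (fst i) (snd i) \<subseteq> U" if "i \<in> C" for i
    using C(2)[OF that] r[of "fst i"] by (meson order_trans subset_ball)
  let ?J = "\<Union>i\<in>C. cball (H (fst i)) (B * snd i)"
  let ?Z = "S - (\<Union>i\<in>C. ball (fst i) (snd i))"
  have "H x \<in> ?J" if x: "x \<in> S" "x \<notin> ?Z" for x
  proof -
    obtain i where "i \<in> C" "x \<in> ball (fst i) (snd i)"
      using x by blast
    then have i: "i \<in> C" "\<bar>x - fst i\<bar> < snd i"
      by (auto simp: dist_real_def abs_minus_commute)
    then have "\<bar>H x - H (fst i)\<bar> \<le> B * \<bar>x - fst i\<bar>"
      using C(2)[OF i(1)] r[of "fst i"] x(1) by auto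
    also have "\<dots> \<le> B * snd i"
      using i(2) \<open>B \<ge> 0\<close> by (intro mult_left_mono) auto
    finally show ?thesis
      using i(1) by (auto simp: dist_real_def abs_minus_commute)
  qed
  then have "H ` S \<subseteq> ?J \<union> H ` ?Z"
    by blast
  moreover have "?J \<in> lmeasurable" "measure lebesgue ?J \<le> B * measure lebesgue U"
    using lmeasurable_UN_stretched_cballs[OF C(1) U \<open>B \<ge> 0\<close> C_U disj]
      measure_UN_stretched_cballs_le[OF C(1) U \<open>B \<ge> 0\<close> C_U disj] by auto
  moreover have "negligible (H ` ?Z)"
    using null by (intro neg) auto
  moreover have "B * measure lebesgue U \<le> B * (measure lebesgue S + d)"
    using U_less \<open>B \<ge> 0\<close> by (intro mult_left_mono) auto
  ultimately show thesis
    by (intro that[of "?J \<union> H ` ?Z"])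
      (auto simp: fmeasurable.Un negligible_imp_measurable measure_Un_null_set fmeasurableD
        negligible_iff_null_sets)
qed

definition level_layer :: "('a \<Rightarrow> real) \<Rightarrow> real \<Rightarrow> 'a set \<Rightarrow> nat \<Rightarrow> 'a set" where
  "level_layer g e S k = {x \<in> S. real k * e \<le> g x \<and> g x < real (Suc k) * e}"

lemma level_layer_subset: "level_layer g e S k \<subseteq> S"
  by (auto simp: level_layer_def)

lemma disjoint_family_level_layer:
  assumes "e > 0"
  shows "disjoint_family (level_layer g e S)"
  unfolding disjoint_family_on_def
proof (intro ballI impI)
  fix m n :: nat
  assume "m \<noteq> n"
  then have "real (Suc m) \<le> real n \<or> real (Suc n) \<le> real m"
    by linarith
  then show "level_layer g e S m \<inter> level_layer g e S n = {}"
    using assms by (auto simp: level_layer_def dest: mult_right_mono[of _ _ e])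
qed

lemma mem_level_layer_floor:
  assumes "x \<in> S" "0 \<le> g x" "e > 0"
  shows "x \<in> level_layer g e S (nat \<lfloor>g x / e\<rfloor>)"
proof -
  have "of_int \<lfloor>g x / e\<rfloor> \<le> g x / e" "g x / e < of_int \<lfloor>g x / e\<rfloor> + 1"
    by linarith+
  then have "of_int \<lfloor>g x / e\<rfloor> * e \<le> g x" "g x < (of_int \<lfloor>g x / e\<rfloor> + 1) * e"
    using assms(3) by (simp_all only: pos_le_divide_eq pos_divide_less_eq)
  then show ?thesis
    using assms by (auto simp: level_layer_def add.commute)
qed

lemma UN_level_layer:
  assumes "\<And>x. x \<in> S \<Longrightarrow> 0 \<le> g x" "e > 0"
  shows "(\<Union>k. level_layer g e S k) = S"
proof (intro equalityI subsetI)
  fix x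
  assume "x \<in> S"
  then have "x \<in> level_layer g e S (nat \<lfloor>g x / e\<rfloor>)"
    using assms by (intro mem_level_layer_floor) auto
  then show "x \<in> (\<Union>k. level_layer g e S k)"
    by blast
qed (auto simp: level_layer_def)

lemma sets_level_layer:
  assumes "S \<in> sets M" "g \<in> borel_measurable M"
  shows "level_layer g e S k \<in> sets M"
proof -
  have "level_layer g e S k = S \<inter> (g -` {real k * e..<real (Suc k) * e} \<inter> space M)"
    using sets.sets_into_space[OF assms(1)] by (auto simp: level_layer_def)
  then show ?thesis
    using assms by auto
qed

lemma suminf_indicator_level_layer:
  assumes "\<And>x. x \<in> S \<Longrightarrow> 0 \<le> g x" "e > 0"
  shows "(\<Sum>k. indicator (level_layer g e S k) x :: ennreal) = indicator S x"
  using suminf_indicator[OF disjoint_family_level_layer[OF \<open>e > 0\<close>], of g S x]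
    UN_level_layer[of S g e] assms by simp

lemma measure_level_layer_le_nn_integral:
  assumes S: "S \<in> sets M" "emeasure M S < \<infinity>" and "g \<in> borel_measurable M" "e > 0"
  shows "ennreal (real (Suc k) * e * measure M (level_layer g e S k))
    \<le> (\<integral>\<^sup>+x. ennreal (g x + e) * indicator (level_layer g e S k) x \<partial>M)"
proof -
  have layer: "level_layer g e S k \<in> sets M"
    using assms by (intro sets_level_layer)
  have "emeasure M (level_layer g e S k) < \<infinity>"
    using S emeasure_mono[OF level_layer_subset] by (metis le_less_trans)
  then have "ennreal (real (Suc k) * e * measure M (level_layer g e S k))
      = (\<integral>\<^sup>+x. ennreal (real (Suc k) * e) * indicator (level_layer g e S k) x \<partial>M)"
    using \<open>e > 0\<close> layer
    by (simp add: nn_integral_cmult_indicator emeasure_eq_ennreal_measure ennreal_mult)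
  also have "\<dots> \<le> (\<integral>\<^sup>+x. ennreal (g x + e) * indicator (level_layer g e S k) x \<partial>M)"
  proof (intro nn_integral_mono)
    fix x
    have "real (Suc k) * e \<le> g x + e" if "x \<in> level_layer g e S k"
      using that by (simp add: level_layer_def algebra_simps)
    then show "ennreal (real (Suc k) * e) * indicator (level_layer g e S k) x
        \<le> ennreal (g x + e) * indicator (level_layer g e S k) x"
      by (simp add: indicator_def ennreal_leI del: ennreal_plus)
  qed
  finally show ?thesis .
qed

lemma suminf_level_layer_measure_le_integral:
  fixes g :: "'a \<Rightarrow> real"
  assumes S: "S \<in> sets M" "emeasure M S < \<infinity>"
    and g: "integrable M g" "\<And>x. 0 \<le> g x" and "e > 0"
  shows "(\<Sum>k. ennreal (real (Suc k) * e * measure M (level_layer g e S k)))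
    \<le> ennreal (integral\<^sup>L M (\<lambda>x. indicator S x * g x) + e * measure M S)"
proof -
  have g_meas: "g \<in> borel_measurable M"
    using g(1) by (rule borel_measurable_integrable)
  have layer_sets: "level_layer g e S k \<in> sets M" for k
    using S(1) g_meas by (rule sets_level_layer)
  have S_int: "integrable M (indicat_real S)"
    using S by (intro integrable_real_indicator) auto
  have "(\<Sum>k. ennreal (real (Suc k) * e * measure M (level_layer g e S k)))
      \<le> (\<Sum>k. \<integral>\<^sup>+x. ennreal (g x + e) * indicator (level_layer g e S k) x \<partial>M)"
    using S g_meas \<open>e > 0\<close> by (intro suminf_le measure_level_layer_le_nn_integral) auto
  also have "\<dots> = (\<integral>\<^sup>+x. (\<Sum>k. ennreal (g x + e) * indicator (level_layer g e S k) x) \<partial>M)"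
    using g_meas layer_sets by (intro nn_integral_suminf[symmetric]) auto
  also have "\<dots> = (\<integral>\<^sup>+x. ennreal (indicator S x * g x + e * indicator S x) \<partial>M)"
    using suminf_indicator_level_layer[of S g e] g(2) \<open>e > 0\<close>
    by (intro nn_integral_cong) (simp add: ennreal_suminf_cmult indicator_def)
  also have "\<dots> = ennreal (integral\<^sup>L M (\<lambda>x. indicator S x * g x + e * indicator S x))"
  proof (rule nn_integral_eq_integral)
    show "integrable M (\<lambda>x. indicator S x * g x + e * indicator S x)"
      using integrable_mult_indicator[OF S(1) g(1)] S_int by auto
    show "AE x in M. 0 \<le> indicator S x * g x + e * indicator S x"
      using g(2) \<open>e > 0\<close> by (simp add: indicator_def)
  qed
  also have "\<dots> = ennreal (integral\<^sup>L M (\<lambda>x. indicator S x * g x) + e * measure M S)"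
    using integrable_mult_indicator[OF S(1) g(1)] S_int
    by (simp add: Bochner_Integration.integral_add S)
  finally show ?thesis .
qed

lemma level_layer_image_emeasure_le:
  fixes h g :: "real \<Rightarrow> real"
  assumes S: "S \<in> lmeasurable" and g: "g \<in> borel_measurable lebesgue" and "e > 0"
    and lip: "\<And>x B. x \<in> S \<Longrightarrow> g x < B \<Longrightarrow>
      \<exists>\<rho>>0. \<forall>y\<in>S. \<bar>y - x\<bar> < \<rho> \<longrightarrow> \<bar>h y - h x\<bar> \<le> B * \<bar>y - x\<bar>"
    and neg: "\<And>Z. Z \<subseteq> S \<Longrightarrow> negligible Z \<Longrightarrow> negligible (h ` Z)"
  obtains T where "h ` level_layer g e S k \<subseteq> T" "T \<in> sets lebesgue"
    "emeasure lebesgue T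
      \<le> ennreal (real (Suc k) * e * measure lebesgue (level_layer g e S k)) + ennreal (e * (1/2)^k)"
proof -
  let ?L = "level_layer g e S k"
  have L_sub: "?L \<subseteq> S"
    by (rule level_layer_subset)
  obtain T where T: "h ` ?L \<subseteq> T" "T \<in> lmeasurable"
    "measure lebesgue T \<le> real (Suc k) * e * (measure lebesgue ?L + (1/2)^k / real (Suc k))"
  proof (rule pointwise_lipschitz_image_measure_le[where B = "real (Suc k) * e" and d = "(1/2)^k / real (Suc k)"])
    show "?L \<in> lmeasurable"
      using fmeasurableD[OF S] g by (intro fmeasurableI2[OF S L_sub] sets_level_layer)
  next
    fix x
    assume "x \<in> ?L"
    then have "x \<in> S" "g x < real (Suc k) * e"
      by (auto simp: level_layer_def)
    then obtain \<rho> where "\<rho> > 0" "\<forall>y\<in>S. \<bar>y - x\<bar> < \<rho> \<longrightarrow> \<bar>h y - h x\<bar> \<le> real (Suc k) * e * \<bar>y - x\<bar>"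
      by (metis lip)
    with L_sub show "\<exists>\<rho>>0. \<forall>y\<in>?L. \<bar>y - x\<bar> < \<rho> \<longrightarrow> \<bar>h y - h x\<bar> \<le> real (Suc k) * e * \<bar>y - x\<bar>"
      by blast
  next
    show "negligible (h ` Z)" if "Z \<subseteq> ?L" "negligible Z" for Z
      using that L_sub by (intro neg) auto
  qed (use \<open>e > 0\<close> in simp_all)
  have "measure lebesgue T \<le> real (Suc k) * e * measure lebesgue ?L + e * (1/2)^k"
    using T(3) by (simp add: distrib_left del: of_nat_Suc)
  then have "emeasure lebesgue T \<le> ennreal (real (Suc k) * e * measure lebesgue ?L) + ennreal (e * (1/2)^k)"
    using T(2) \<open>e > 0\<close> by (simp add: emeasure_eq_measure2 ennreal_plus[symmetric] del: ennreal_plus)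
  with T(1,2) show thesis
    using that by (blast dest: fmeasurableD)
qed

lemma suminf_ennreal_geometric_half:
  assumes "c \<ge> 0"
  shows "(\<Sum>k. ennreal (c * (1/2)^k)) = ennreal (2 * c)"
proof -
  have "(\<lambda>k. c * (1/2::real)^k) sums (c * 2)"
    using geometric_sums[of "1/2::real"] by (intro sums_mult) simp
  then show ?thesis
    using assms by (subst suminf_ennreal2) (auto simp: sums_iff mult.commute)
qed

lemma image_measure_le_integral:
  fixes h g :: "real \<Rightarrow> real"
  assumes S: "S \<in> lmeasurable" and g: "integrable lebesgue g" "\<And>x. 0 \<le> g x"
    and lip: "\<And>x B. x \<in> S \<Longrightarrow> g x < B \<Longrightarrow>
      \<exists>\<rho>>0. \<forall>y\<in>S. \<bar>y - x\<bar> < \<rho> \<longrightarrow> \<bar>h y - h x\<bar> \<le> B * \<bar>y - x\<bar>"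
    and neg: "\<And>Z. Z \<subseteq> S \<Longrightarrow> negligible Z \<Longrightarrow> negligible (h ` Z)"
    and "e > 0"
  obtains T where "h ` S \<subseteq> T" "T \<in> sets lebesgue"
    "emeasure lebesgue T \<le> ennreal (integral\<^sup>L lebesgue (\<lambda>x. indicator S x * g x) + e)"
proof -
  \<comment> \<open>the layers cost \<open>\<epsilon> * measure lebesgue S\<close>, their slacks \<open>\<epsilon> * (1/2)^k\<close> sum to \<open>2 * \<epsilon>\<close>\<close>
  define \<epsilon> where "\<epsilon> = e / (measure lebesgue S + 2)"
  have "measure lebesgue S + 2 > 0"
    using measure_nonneg[of lebesgue S] by linarith
  then have "\<epsilon> > 0" and "\<epsilon> * (measure lebesgue S + 2) = e"
    using \<open>e > 0\<close> by (simp_all add: \<epsilon>_def)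
  then have e_eq: "\<epsilon> * measure lebesgue S + 2 * \<epsilon> = e"
    by (simp add: algebra_simps)
  let ?L = "level_layer g \<epsilon> S"
  let ?I = "integral\<^sup>L lebesgue (\<lambda>x. indicator S x * g x)"
  have "\<exists>T. h ` ?L k \<subseteq> T \<and> T \<in> sets lebesgue \<and> emeasure lebesgue T
      \<le> ennreal (real (Suc k) * \<epsilon> * measure lebesgue (?L k)) + ennreal (\<epsilon> * (1/2)^k)" for k
    by (rule level_layer_image_emeasure_le[OF S borel_measurable_integrable[OF g(1)] \<open>\<epsilon> > 0\<close> lip neg])
      blast+
  then obtain T where T: "\<And>k. h ` ?L k \<subseteq> T k" "\<And>k. T k \<in> sets lebesgue"
    "\<And>k. emeasure lebesgue (T k)
      \<le> ennreal (real (Suc k) * \<epsilon> * measure lebesgue (?L k)) + ennreal (\<epsilon> * (1/2)^k)"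
    by metis
  have "?I \<ge> 0"
    using g(2) by (intro integral_nonneg_AE) (auto simp: indicator_def)
  have "h ` S = (\<Union>k. h ` ?L k)"
    using UN_level_layer[of S g \<epsilon>] g(2) \<open>\<epsilon> > 0\<close> by (metis image_UN)
  then have "h ` S \<subseteq> (\<Union>k. T k)"
    using T(1) by blast
  moreover have "(\<Union>k. T k) \<in> sets lebesgue"
    using T(2) by auto
  moreover have "emeasure lebesgue (\<Union>k. T k) \<le> ennreal (?I + e)"
  proof -
    have "emeasure lebesgue (\<Union>k. T k) \<le> (\<Sum>k. emeasure lebesgue (T k))"
      using T(2) by (intro emeasure_subadditive_countably) auto
    also have "\<dots> \<le> (\<Sum>k. ennreal (real (Suc k) * \<epsilon> * measure lebesgue (?L k)) + ennreal (\<epsilon> * (1/2)^k))"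
      using T(3) by (intro suminf_le) auto
    also have "\<dots> = (\<Sum>k. ennreal (real (Suc k) * \<epsilon> * measure lebesgue (?L k))) + (\<Sum>k. ennreal (\<epsilon> * (1/2)^k))"
      by (rule suminf_add[symmetric]) auto
    also have "\<dots> = (\<Sum>k. ennreal (real (Suc k) * \<epsilon> * measure lebesgue (?L k))) + ennreal (2 * \<epsilon>)"
      by (simp only: suminf_ennreal_geometric_half[OF less_imp_le[OF \<open>\<epsilon> > 0\<close>]])
    also have "\<dots> \<le> ennreal (?I + \<epsilon> * measure lebesgue S) + ennreal (2 * \<epsilon>)"
      using S g \<open>\<epsilon> > 0\<close> unfolding fmeasurable_def
      by (intro add_right_mono suminf_level_layer_measure_le_integral) auto
    also have "\<dots> = ennreal (?I + e)"
      using \<open>?I \<ge> 0\<close> \<open>\<epsilon> > 0\<close> e_eq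
      by (simp add: ennreal_plus[symmetric] add.assoc del: ennreal_plus)
    finally show ?thesis .
  qed
  ultimately show thesis
    using that by blast
qed

lemma integral_indicator_less_if_emeasure_small:
  fixes g :: "'a \<Rightarrow> real"
  assumes g: "integrable M g" "\<And>x. 0 \<le> g x" and "\<epsilon> > 0"
  obtains \<delta> where "\<delta> > 0"
    "\<And>A. A \<in> sets M \<Longrightarrow> emeasure M A < ennreal \<delta> \<Longrightarrow> integral\<^sup>L M (\<lambda>x. indicator A x * g x) < \<epsilon>"
proof -
  \<comment> \<open>the part of \<open>g\<close> above the level \<open>N\<close> has small integral, the part below it contributes
    at most \<open>N\<close> times the measure\<close>
  define s where "s N x = g x - min (g x) (real N)" for N :: nat and x
  have s_meas: "s N \<in> borel_measurable M" for N
    unfolding s_def using borel_measurable_integrable[OF g(1)] by measurable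
  have s_bounds: "0 \<le> s N x" "s N x \<le> g x" for N x
    unfolding s_def using g(2)[of x] by auto
  have s_int: "integrable M (s N)" for N
    using s_bounds g(2) by (intro Bochner_Integration.integrable_bound[OF g(1) s_meas]) auto
  have "(\<lambda>N. s N x) \<longlonglongrightarrow> 0" for x
  proof (rule tendsto_eventually)
    show "\<forall>\<^sub>F N in sequentially. s N x = 0"
      using eventually_ge_at_top[of "nat \<lceil>g x\<rceil>"]
      by eventually_elim (auto simp: s_def dest!: real_nat_ceiling_ge[of "g x", THEN order_trans])
  qed
  then have "(\<lambda>N. integral\<^sup>L M (s N)) \<longlonglongrightarrow> 0"
    using integral_dominated_convergence[of "\<lambda>x. 0::real" M s g, OF _ s_meas g(1)] s_bounds
    by simp
  then obtain N where N: "integral\<^sup>L M (s N) < \<epsilon> / 2"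
    using order_tendstoD(2)[of _ 0 sequentially "\<epsilon> / 2"] \<open>\<epsilon> > 0\<close>
    by (metis eventually_sequentially half_gt_zero order_refl)
  define \<delta> where "\<delta> = \<epsilon> / (2 * (real N + 1))"
  have "\<delta> > 0"
    unfolding \<delta>_def using \<open>\<epsilon> > 0\<close> by simp
  have "integral\<^sup>L M (\<lambda>x. indicator A x * g x) < \<epsilon>"
    if A: "A \<in> sets M" "emeasure M A < ennreal \<delta>" for A
  proof -
    have "emeasure M A < \<infinity>"
      using A(2) less_trans by fastforce
    then have A_int: "integrable M (indicat_real A)"
      using A(1) by (intro integrable_real_indicator) auto
    have "measure M A \<le> \<delta>"
      using A(2) \<open>\<delta> > 0\<close> by (simp add: measure_def enn2real_leI less_imp_le)
    have "integral\<^sup>L M (\<lambda>x. indicator A x * g x) \<le> integral\<^sup>L M (\<lambda>x. real N * indicator A x + s N x)"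
    proof (rule integral_mono)
      show "integrable M (\<lambda>x. indicator A x * g x)"
        using integrable_mult_indicator[OF A(1) g(1)] by simp
      show "integrable M (\<lambda>x. real N * indicator A x + s N x)"
        using A_int s_int by simp
      show "indicator A x * g x \<le> real N * indicator A x + s N x" for x
        using g(2)[of x] by (auto simp: s_def indicator_def)
    qed
    also have "\<dots> = real N * measure M A + integral\<^sup>L M (s N)"
      using A_int s_int sets.Int_space_eq2[OF A(1)]
      by (simp add: Bochner_Integration.integral_add integral_indicator)
    also have "real N * measure M A \<le> real N * \<delta>"
      using \<open>measure M A \<le> \<delta>\<close> by (intro mult_left_mono) auto
    also have "real N * \<delta> < \<epsilon> / 2"
      unfolding \<delta>_def using \<open>\<epsilon> > 0\<close> by (simp add: field_simps)
    finally show ?thesis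
      using N by linarith
  qed
  with \<open>\<delta> > 0\<close> show thesis
    using that by blast
qed

lemma sum_integral_indicator_disjoint:
  fixes g :: "'a \<Rightarrow> real"
  assumes "finite I" "disjoint_family_on A I" "\<And>i. i \<in> I \<Longrightarrow> A i \<in> sets M" "integrable M g"
  shows "(\<Sum>i\<in>I. integral\<^sup>L M (\<lambda>x. indicator (A i) x * g x))
    = integral\<^sup>L M (\<lambda>x. indicator (\<Union>i\<in>I. A i) x * g x)"
proof -
  have "(\<Sum>i\<in>I. integral\<^sup>L M (\<lambda>x. indicator (A i) x * g x))
      = integral\<^sup>L M (\<lambda>x. \<Sum>i\<in>I. indicator (A i) x * g x)"
    using assms integrable_mult_indicator[of _ M g]
    by (intro Bochner_Integration.integral_sum[symmetric]) auto
  also have "\<dots> = integral\<^sup>L M (\<lambda>x. indicator (\<Union>i\<in>I. A i) x * g x)"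
    using assms(1,2) by (simp add: indicator_UN_disjoint sum_distrib_right)
  finally show ?thesis .
qed

lemma Icc_dist_subset_image:
  fixes f :: "real \<Rightarrow> 'a::metric_space"
  assumes "continuous_on {c..d} f" "c \<le> d"
  shows "{0..dist (f c) (f d)} \<subseteq> (\<lambda>t. dist (f c) (f t)) ` {c..d}"
proof -
  have "connected ((\<lambda>t. dist (f c) (f t)) ` {c..d})"
    by (intro connected_continuous_image continuous_intros assms) auto
  moreover have "0 \<in> (\<lambda>t. dist (f c) (f t)) ` {c..d}"
    and "dist (f c) (f d) \<in> (\<lambda>t. dist (f c) (f t)) ` {c..d}"
    using assms by force+
  ultimately show ?thesis
    by (meson connected_contains_Icc)
qed

lemma md_less_imp_local_bound:
  fixes f :: "real \<Rightarrow> 'a::metric_space"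
  assumes "a < b" "x \<in> {a..b}" "md_exists f a b x" "md f a b x < B"
  obtains \<rho> where "\<rho> > 0" "\<And>y. y \<in> {a..b} \<Longrightarrow> \<bar>y - x\<bar> < \<rho> \<Longrightarrow> dist (f y) (f x) \<le> B * \<bar>y - x\<bar>"
proof -
  let ?F = "at (0::real) within {t. x + t \<in> {a..b}}"
  obtain L where L: "((\<lambda>t. dist (f (x + t)) (f x) / \<bar>t\<bar>) \<longlongrightarrow> L) ?F"
    using assms(3) unfolding md_exists_def by blast
  have "{t. x + t \<in> {a..b}} = {a - x..b - x}"
    by auto
  then have "\<not> trivial_limit ?F"
    using assms(1,2) by (auto simp: trivial_limit_within islimpt_Icc)
  then have "md f a b x = L"
    unfolding md_def using L by (simp add: tendsto_Lim)
  then have "\<forall>\<^sub>F t in ?F. dist (f (x + t)) (f x) / \<bar>t\<bar> < B"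
    using L assms(4) order_tendstoD(2) by metis
  then obtain \<rho> where "\<rho> > 0"
    and \<rho>: "\<And>t. x + t \<in> {a..b} \<Longrightarrow> t \<noteq> 0 \<Longrightarrow> \<bar>t\<bar> < \<rho> \<Longrightarrow> dist (f (x + t)) (f x) / \<bar>t\<bar> < B"
    unfolding eventually_at by (auto simp: dist_real_def)
  have "dist (f y) (f x) \<le> B * \<bar>y - x\<bar>" if "y \<in> {a..b}" "\<bar>y - x\<bar> < \<rho>" for y
  proof (cases "y = x")
    case False
    then have "dist (f (x + (y - x))) (f x) / \<bar>y - x\<bar> < B"
      using that by (intro \<rho>) auto
    then show ?thesis
      using False by (simp add: divide_simps split: if_splits)
  qed simp
  with \<open>\<rho> > 0\<close> show thesis
    using that by blast
qed

lemma md_less_imp_local_bound_dist: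
  fixes f :: "real \<Rightarrow> 'a::metric_space"
  assumes "a < b" "x \<in> {a..b}" "md_exists f a b x" "md f a b x < B" "S \<subseteq> {a..b}"
  shows "\<exists>\<rho>>0. \<forall>y\<in>S. \<bar>y - x\<bar> < \<rho> \<longrightarrow> \<bar>dist p (f y) - dist p (f x)\<bar> \<le> B * \<bar>y - x\<bar>"
proof -
  obtain \<rho> where "\<rho> > 0"
    and \<rho>: "\<And>y. y \<in> {a..b} \<Longrightarrow> \<bar>y - x\<bar> < \<rho> \<Longrightarrow> dist (f y) (f x) \<le> B * \<bar>y - x\<bar>"
    using md_less_imp_local_bound[OF assms(1-4)] by blast
  have "\<bar>dist p (f y) - dist p (f x)\<bar> \<le> B * \<bar>y - x\<bar>" if "y \<in> S" "\<bar>y - x\<bar> < \<rho>" for y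
    using abs_dist_diff_le[of "f y" p "f x"] \<rho>[of y] that assms(5)
    by (auto simp: dist_commute)
  with \<open>\<rho> > 0\<close> show ?thesis
    by blast
qed

lemma hausdorff1_zero_imp_small_cover:
  assumes "hausdorff1 X = 0" "e > 0"
  obtains C :: "nat \<Rightarrow> 'a::metric_space set"
  where "X \<subseteq> (\<Union>i. C i)" "\<And>i. bounded (C i)" "(\<Sum>i. ennreal (diameter (C i))) < ennreal e"
proof -
  have "hausdorff1_delta 1 X = 0"
    using assms(1) unfolding hausdorff1_def bot_ennreal[symmetric] SUP_bot_conv by auto
  then have "hausdorff1_delta 1 X < ennreal e"
    using assms(2) by simp
  then show thesis
    using that unfolding hausdorff1_delta_def INF_less_iff by blast
qed

lemma hausdorff1_zero_imp_negligible_dist_image: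
  fixes X :: "'a::metric_space set"
  assumes "hausdorff1 X = 0"
  shows "negligible ((\<lambda>y. dist p y) ` X)"
  unfolding negligible_outer_le
proof (intro allI impI)
  fix e :: real
  assume "e > 0"
  then obtain C :: "nat \<Rightarrow> 'a set" where C: "X \<subseteq> (\<Union>i. C i)" "\<And>i. bounded (C i)"
    "(\<Sum>i. ennreal (diameter (C i))) < ennreal (e/2)"
    using hausdorff1_zero_imp_small_cover[OF assms, of "e/2"] by auto
  \<comment> \<open>\<open>dist p\<close> maps a set of diameter \<open>r\<close> into an interval of length \<open>2 r\<close>\<close>
  define c where "c i = (SOME y. y \<in> C i)" for i
  define J where "J i = (if C i = {} then {} else {dist p (c i) - diameter (C i) .. dist p (c i) + diameter (C i)})" for i
  have J_sets: "J i \<in> sets lebesgue" for i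
    unfolding J_def by auto
  have "(\<lambda>y. dist p y) ` X \<subseteq> (\<Union>i. J i)"
  proof
    fix s assume "s \<in> (\<lambda>y. dist p y) ` X"
    then obtain y i where y: "s = dist p y" "y \<in> C i"
      using C(1) by blast
    have "c i \<in> C i"
      unfolding c_def using y(2) by (rule someI)
    then have "dist y (c i) \<le> diameter (C i)"
      using diameter_bounded_bound[OF C(2) y(2)] by blast
    then have "s \<in> J i"
      unfolding J_def y(1) using y(2) dist_triangle[of p y "c i"] dist_triangle[of p "c i" y]
      by (auto simp: dist_commute)
    then show "s \<in> (\<Union>i. J i)"
      by blast
  qed
  moreover have "emeasure lebesgue (\<Union>i. J i) \<le> ennreal e"
  proof -
    have "emeasure lebesgue (\<Union>i. J i) \<le> (\<Sum>i. emeasure lebesgue (J i))"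
      using J_sets by (intro emeasure_subadditive_countably) auto
    also have "\<dots> \<le> (\<Sum>i. 2 * ennreal (diameter (C i)))"
      using diameter_ge_0[OF C(2)]
      by (intro suminf_le) (auto simp: J_def emeasure_lborel_Icc_eq ennreal_mult)
    also have "\<dots> = 2 * (\<Sum>i. ennreal (diameter (C i)))"
      by (rule ennreal_suminf_cmult)
    also have "\<dots> \<le> 2 * ennreal (e/2)"
      using C(3) by (intro mult_left_mono) auto
    also have "\<dots> = ennreal e"
      using \<open>e > 0\<close> by (subst ennreal_numeral[symmetric], subst ennreal_mult[symmetric]) auto
    finally show ?thesis .
  qed
  moreover have "(\<Union>i. J i) \<in> lmeasurable"
    using J_sets \<open>e > 0\<close> calculation(2) by (intro fmeasurableI) (auto intro: le_less_trans)
  moreover have "measure lebesgue (\<Union>i. J i) \<le> e"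
    using calculation(2) \<open>e > 0\<close> by (simp add: measure_def enn2real_leI)
  ultimately show "\<exists>T. (\<lambda>y. dist p y) ` X \<subseteq> T \<and> T \<in> lmeasurable \<and> measure lebesgue T \<le> e"
    by blast
qed

lemma property_N_imp_negligible_dist_image:
  fixes f :: "real \<Rightarrow> 'a::metric_space"
  assumes "property_N f a b" "Z \<subseteq> {a..b}" "negligible Z"
  shows "negligible ((\<lambda>t. dist p (f t)) ` Z)"
proof -
  have "hausdorff1 (f ` Z) = 0"
    using assms unfolding property_N_def negligible_iff_null_sets by blast
  then show ?thesis
    using hausdorff1_zero_imp_negligible_dist_image[of "f ` Z" p] by (simp add: image_image)
qed

lemma le_integral_if_Icc_subset_image:
  fixes h g :: "real \<Rightarrow> real"
  assumes S: "S \<in> lmeasurable" and g: "integrable lebesgue g" "\<And>x. 0 \<le> g x"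
    and lip: "\<And>x B. x \<in> S \<Longrightarrow> g x < B \<Longrightarrow>
      \<exists>\<rho>>0. \<forall>y\<in>S. \<bar>y - x\<bar> < \<rho> \<longrightarrow> \<bar>h y - h x\<bar> \<le> B * \<bar>y - x\<bar>"
    and neg: "\<And>Z. Z \<subseteq> S \<Longrightarrow> negligible Z \<Longrightarrow> negligible (h ` Z)"
    and cover: "{0..D} \<subseteq> h ` S \<union> Z" and "negligible Z"
  shows "D \<le> integral\<^sup>L lebesgue (\<lambda>x. indicator S x * g x)"
proof (rule field_le_epsilon)
  fix e :: real
  assume "e > 0"
  let ?I = "integral\<^sup>L lebesgue (\<lambda>x. indicator S x * g x)"
  obtain T where T: "h ` S \<subseteq> T" "T \<in> sets lebesgue" "emeasure lebesgue T \<le> ennreal (?I + e)"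
    using image_measure_le_integral[OF S g lip neg \<open>e > 0\<close>] by blast
  have Z: "Z \<in> null_sets lebesgue"
    using \<open>negligible Z\<close> by (simp add: negligible_iff_null_sets)
  have "ennreal D = emeasure lebesgue {0..D}"
    by (cases "D \<ge> 0") (simp_all add: ennreal_neg)
  also have "\<dots> \<le> emeasure lebesgue (T \<union> Z)"
    using T(1,2) cover Z by (intro emeasure_mono) auto
  also have "\<dots> = emeasure lebesgue T"
    using T(2) Z by (rule emeasure_Un_null_set)
  finally have "ennreal D \<le> ennreal (?I + e)"
    using T(3) by order
  moreover have "?I \<ge> 0"
    using g(2) by (intro integral_nonneg_AE) (simp add: indicator_def)
  ultimately show "D \<le> ?I + e"
    using \<open>e > 0\<close> by (simp add: ennreal_le_iff del: ennreal_plus)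
qed

lemma dist_le_integral_of_md_le:
  fixes f :: "real \<Rightarrow> 'a::metric_space" and g :: "real \<Rightarrow> real"
  assumes "a < b" and cont: "continuous_on {a..b} f" and PN: "property_N f a b"
    and N: "negligible N" and md_ex: "\<And>x. x \<in> {a..b} - N \<Longrightarrow> md_exists f a b x"
    and g: "integrable lebesgue g" "\<And>x. 0 \<le> g x"
    and md_le: "\<And>x. x \<in> {a..b} - N \<Longrightarrow> md f a b x \<le> g x"
    and cd: "a \<le> c" "c \<le> d" "d \<le> b"
  shows "dist (f c) (f d) \<le> integral\<^sup>L lebesgue (\<lambda>x. indicator {c..<d} x * g x)"
proof -
  define h where "h t = dist (f c) (f t)" for t
  define E where "E = {c..<d} - N"
  have E_good: "E \<subseteq> {a..b} - N"
    using cd by (auto simp: E_def)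
  have E: "E \<in> lmeasurable"
    unfolding E_def using N
    by (intro bounded_set_imp_lmeasurable bounded_subset[OF bounded_Ico[of c d]])
      (auto simp: negligible_imp_sets)
  have neg: "negligible (h ` Z)" if "Z \<subseteq> {a..b}" "negligible Z" for Z
    unfolding h_def using PN that by (rule property_N_imp_negligible_dist_image)
  have "{c..d} - E \<subseteq> N \<union> {d}"
    by (auto simp: E_def)
  then have "negligible ({c..d} - E)"
    using N by (meson negligible_Un negligible_sing negligible_subset)
  have "dist (f c) (f d) \<le> integral\<^sup>L lebesgue (\<lambda>x. indicator E x * g x)"
  proof (rule le_integral_if_Icc_subset_image[OF E g])
    show "\<exists>\<rho>>0. \<forall>y\<in>E. \<bar>y - x\<bar> < \<rho> \<longrightarrow> \<bar>h y - h x\<bar> \<le> B * \<bar>y - x\<bar>"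
      if "x \<in> E" "g x < B" for x B
    proof -
      have x: "x \<in> {a..b} - N"
        using that(1) E_good by blast
      then have "md f a b x < B"
        using md_le[OF x] that(2) by linarith
      then show ?thesis
        unfolding h_def using x E_good
        by (intro md_less_imp_local_bound_dist[OF \<open>a < b\<close> _ md_ex[OF x]]) auto
    qed
    show "negligible (h ` Z)" if "Z \<subseteq> E" "negligible Z" for Z
      using that E_good by (intro neg) auto
    show "{0..dist (f c) (f d)} \<subseteq> h ` E \<union> h ` ({c..d} - E)"
      using Icc_dist_subset_image[OF continuous_on_subset[OF cont] \<open>c \<le> d\<close>] cd
      unfolding h_def by auto
    show "negligible (h ` ({c..d} - E))"
      using \<open>negligible ({c..d} - E)\<close> cd by (intro neg) auto
  qed
  also have "\<dots> \<le> integral\<^sup>L lebesgue (\<lambda>x. indicator {c..<d} x * g x)"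
  proof (rule integral_mono)
    show "integrable lebesgue (\<lambda>x. indicator E x * g x)"
      using integrable_mult_indicator[OF fmeasurableD[OF E] g(1)] by simp
    show "integrable lebesgue (\<lambda>x. indicator {c..<d} x * g x)"
      using integrable_mult_indicator[of "{c..<d}" lebesgue g] g(1) by simp
    show "indicator E x * g x \<le> indicator {c..<d} x * g x" for x
      using g(2)[of x] by (simp add: E_def indicator_def)
  qed
  finally show ?thesis .
qed

lemma disjoint_family_on_Ico:
  fixes as bs :: "nat \<Rightarrow> 'a::linorder"
  assumes "\<forall>i<n. \<forall>j<n. i \<noteq> j \<longrightarrow> bs i \<le> as j \<or> bs j \<le> as i"
  shows "disjoint_family_on (\<lambda>i. {as i..<bs i}) {..<n}"
  unfolding disjoint_family_on_def
proof (intro ballI impI)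
  fix i j
  assume "i \<in> {..<n}" "j \<in> {..<n}" "i \<noteq> j"
  then have "bs i \<le> as j \<or> bs j \<le> as i"
    using assms by blast
  then show "{as i..<bs i} \<inter> {as j..<bs j} = {}"
    by auto
qed

lemma abs_cont_metric_if_dist_le_integral:
  fixes f :: "real \<Rightarrow> 'a::metric_space" and g :: "real \<Rightarrow> real"
  assumes g: "integrable lebesgue g" "\<And>x. 0 \<le> g x"
    and dist_le: "\<And>c d. a \<le> c \<Longrightarrow> c \<le> d \<Longrightarrow> d \<le> b \<Longrightarrow>
      dist (f c) (f d) \<le> integral\<^sup>L lebesgue (\<lambda>x. indicator {c..<d} x * g x)"
  shows "abs_cont_metric f a b"
  unfolding abs_cont_metric_def
proof (intro allI impI)
  fix \<epsilon> :: real
  assume "\<epsilon> > 0"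
  then obtain \<delta> where "\<delta> > 0" and \<delta>: "\<And>A. A \<in> sets lebesgue \<Longrightarrow> emeasure lebesgue A < ennreal \<delta> \<Longrightarrow>
      integral\<^sup>L lebesgue (\<lambda>x. indicator A x * g x) < \<epsilon>"
    using integral_indicator_less_if_emeasure_small[OF g] by blast
  have sum_small: "(\<Sum>i<n. dist (f (bs i)) (f (as i))) < \<epsilon>"
    if intervals: "\<forall>i<n. a \<le> as i \<and> as i \<le> bs i \<and> bs i \<le> b"
      and disj: "\<forall>i<n. \<forall>j<n. i \<noteq> j \<longrightarrow> bs i \<le> as j \<or> bs j \<le> as i"
      and small: "(\<Sum>i<n. bs i - as i) < \<delta>" for n :: nat and as bs
  proof -
    define I where "I i = {as i..<bs i}" for i
    have "disjoint_family_on I {..<n}"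
      unfolding I_def using disj by (rule disjoint_family_on_Ico)
    have "(\<Sum>i<n. dist (f (bs i)) (f (as i))) \<le> (\<Sum>i<n. integral\<^sup>L lebesgue (\<lambda>x. indicator (I i) x * g x))"
      using intervals dist_le by (intro sum_mono) (simp add: dist_commute I_def)
    also have "\<dots> = integral\<^sup>L lebesgue (\<lambda>x. indicator (\<Union>i<n. I i) x * g x)"
      using \<open>disjoint_family_on I {..<n}\<close> g(1) unfolding I_def
      by (intro sum_integral_indicator_disjoint) auto
    also have "\<dots> < \<epsilon>"
    proof (rule \<delta>)
      show "(\<Union>i<n. I i) \<in> sets lebesgue"
        unfolding I_def by auto
      have "emeasure lebesgue (\<Union>i<n. I i) \<le> (\<Sum>i<n. emeasure lebesgue (I i))"
        unfolding I_def by (intro emeasure_subadditive_finite) auto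
      also have "\<dots> = (\<Sum>i<n. ennreal (bs i - as i))"
        using intervals by (intro sum.cong refl) (simp add: I_def)
      also have "\<dots> = ennreal (\<Sum>i<n. bs i - as i)"
        using intervals by (intro sum_ennreal) simp
      also have "\<dots> < ennreal \<delta>"
        using small \<open>\<delta> > 0\<close> by (simp add: ennreal_lessI)
      finally show "emeasure lebesgue (\<Union>i<n. I i) < ennreal \<delta>" .
    qed
    finally show ?thesis .
  qed
  with \<open>\<delta> > 0\<close> show "\<exists>\<delta>>0. \<forall>(n::nat) as bs. (\<forall>i<n. a \<le> as i \<and> as i \<le> bs i \<and> bs i \<le> b) \<and>
      (\<forall>i<n. \<forall>j<n. i \<noteq> j \<longrightarrow> bs i \<le> as j \<or> bs j \<le> as i) \<and> (\<Sum>i<n. bs i - as i) < \<delta> \<longrightarrow>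
      (\<Sum>i<n. dist (f (bs i)) (f (as i))) < \<epsilon>"
    by (intro exI[of _ \<delta>] conjI allI impI) (auto intro!: sum_small)
qed

theorem theorem3p7:
  fixes f :: "real \<Rightarrow> 'a::metric_space" and a b :: real
  assumes "a < b"
    and "continuous_on {a..b} f"
    and "AE x in lebesgue_on {a..b}. md_exists f a b x"
    and "integrable (lebesgue_on {a..b}) (md f a b)"
    and "property_N f a b"
  shows "abs_cont_metric f a b"
proof -
  define g where "g x = \<bar>indicator {a..b} x * md f a b x\<bar>" for x
  have "integrable lebesgue (\<lambda>x. indicator {a..b} x *\<^sub>R md f a b x)"
    using assms(4) integrable_restrict_space[of "{a..b}" lebesgue "md f a b"] by simp
  then have g_int: "integrable lebesgue g"
    unfolding g_def by (intro integrable_abs) simp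
  have md_le: "md f a b x \<le> g x" if "x \<in> {a..b}" for x
    using that by (simp add: g_def)
  have "AE x in lebesgue. x \<in> {a..b} \<longrightarrow> md_exists f a b x"
    using assms(3) by (subst (asm) AE_restrict_space_iff) auto
  then obtain N where N: "N \<in> null_sets lebesgue" "\<And>x. x \<in> {a..b} - N \<Longrightarrow> md_exists f a b x"
    by (auto elim!: AE_E3)
  have N_neg: "negligible N"
    using N(1) negligible_iff_null_sets by blast
  have "dist (f c) (f d) \<le> integral\<^sup>L lebesgue (\<lambda>x. indicator {c..<d} x * g x)"
    if "a \<le> c" "c \<le> d" "d \<le> b" for c d
    using dist_le_integral_of_md_le[OF assms(1,2,5) N_neg N(2) g_int _ md_le that] by (simp add: g_def)
  then show ?thesis
    using g_int by (intro abs_cont_metric_if_dist_le_integral) (auto simp: g_def)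
qed

end
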